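(* Let $\succeq$ be a preference order on $\mathcal L^\infty(\Omega,\mathcal F)$ satisfying (SM), (PC) and (ST), let $\mathcal G\subseteq\mathcal F$ be a sub-$\sigma$-algebra and $f\in\mathcal L^\infty(\Omega,\mathcal F)$. Then $\mathfrak m(f\mid\mathcal G)\neq\varnothing$, and for any $g,\tilde g\in\mathfrak m(f\mid\mathcal G)$ one has $\{g\neq\tilde g\}\in\mathcal N_\succeq$.
   Context: $\mathcal L^\infty(\Omega,\mathcal F)$: bounded $\mathcal F$-measurable real functions. Preference order: complete transitive relation; $\succ,\sim$ as usual. Null events $\mathcal N_\succeq=\{A\in\mathcal F: f1_A+g1_{A^c}\sim g\ \forall f,g\}$. (SM): for $A\notin\mathcal N_\succeq$, every $f$ and constants $x>y$: $x1_A+f1_{A^c}\succ y1_A+f1_{A^c}$. (ST): if $f1_A+h1_{A^c}\succeq g1_A+h1_{A^c}$ then $f1_A+\tilde h1_{A^c}\succeq g1_A+\tilde h1_{A^c}$ for every $\tilde h$. (PC): for uniformly bounded $f_n\to f$ pointwise and $g\succ f$ (resp. $f\succ g$) there is $N$ with $g\succ f_n$ (resp. $f_n\succ g$) for $n>N$. Conditional Chisini mean: $\mathfrak m(f\mid\mathcal G)=\{g\in\mathcal L^\infty(\Omega,\mathcal G): f1_A\sim g1_A\ \forall A\in\mathcal G\}$. *)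

theory Defs
  imports "HOL-Probability.Probability"
begin

text \<open>The measurable space (Omega, F) is represented by a measure M:
  Omega = space M, F = sets M (only the sigma-algebra of M is used).
  Elements of L-infinity(Omega,F): bounded F-measurable real functions on Omega,
  represented extensionally (value 0 outside Omega).\<close>

definition Linf :: "'a measure \<Rightarrow> ('a \<Rightarrow> real) set" where
  "Linf M = {f. f \<in> borel_measurable M \<and> bounded (f ` space M) \<and>
                 (\<forall>x. x \<notin> space M \<longrightarrow> f x = 0)}"

definition paste :: "'a measure \<Rightarrow> 'a set \<Rightarrow> ('a \<Rightarrow> real) \<Rightarrow> ('a \<Rightarrow> real) \<Rightarrow> 'a \<Rightarrow> real" where
  "paste M A f g = (\<lambda>x. f x * indicator A x + g x * indicator (space M - A) x)"

definition restr :: "'a set \<Rightarrow> ('a \<Rightarrow> real) \<Rightarrow> 'a \<Rightarrow> real" where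
  "restr A f = (\<lambda>x. f x * indicator A x)"

definition preference_order :: "'a measure \<Rightarrow> (('a \<Rightarrow> real) \<Rightarrow> ('a \<Rightarrow> real) \<Rightarrow> bool) \<Rightarrow> bool" where
  "preference_order M pr \<longleftrightarrow>
     (\<forall>f\<in>Linf M. \<forall>g\<in>Linf M. pr f g \<or> pr g f) \<and>
     (\<forall>f\<in>Linf M. \<forall>g\<in>Linf M. \<forall>h\<in>Linf M. pr f g \<longrightarrow> pr g h \<longrightarrow> pr f h)"

definition strict_pref :: "(('a \<Rightarrow> real) \<Rightarrow> ('a \<Rightarrow> real) \<Rightarrow> bool) \<Rightarrow> ('a \<Rightarrow> real) \<Rightarrow> ('a \<Rightarrow> real) \<Rightarrow> bool" where
  "strict_pref pr f g \<longleftrightarrow> pr f g \<and> \<not> pr g f"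

definition indiff :: "(('a \<Rightarrow> real) \<Rightarrow> ('a \<Rightarrow> real) \<Rightarrow> bool) \<Rightarrow> ('a \<Rightarrow> real) \<Rightarrow> ('a \<Rightarrow> real) \<Rightarrow> bool" where
  "indiff pr f g \<longleftrightarrow> pr f g \<and> pr g f"

definition null_events :: "'a measure \<Rightarrow> (('a \<Rightarrow> real) \<Rightarrow> ('a \<Rightarrow> real) \<Rightarrow> bool) \<Rightarrow> 'a set set" where
  "null_events M pr = {A \<in> sets M. \<forall>f\<in>Linf M. \<forall>g\<in>Linf M. indiff pr (paste M A f g) g}"

definition SM :: "'a measure \<Rightarrow> (('a \<Rightarrow> real) \<Rightarrow> ('a \<Rightarrow> real) \<Rightarrow> bool) \<Rightarrow> bool" where
  "SM M pr \<longleftrightarrow> (\<forall>A\<in>sets M. A \<notin> null_events M pr \<longrightarrow>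
     (\<forall>f\<in>Linf M. \<forall>x y::real. x > y \<longrightarrow>
        strict_pref pr (paste M A (\<lambda>_. x) f) (paste M A (\<lambda>_. y) f)))"

definition ST :: "'a measure \<Rightarrow> (('a \<Rightarrow> real) \<Rightarrow> ('a \<Rightarrow> real) \<Rightarrow> bool) \<Rightarrow> bool" where
  "ST M pr \<longleftrightarrow> (\<forall>A\<in>sets M. \<forall>f\<in>Linf M. \<forall>g\<in>Linf M. \<forall>h\<in>Linf M. \<forall>h'\<in>Linf M.
     pr (paste M A f h) (paste M A g h) \<longrightarrow> pr (paste M A f h') (paste M A g h'))"

definition PC :: "'a measure \<Rightarrow> (('a \<Rightarrow> real) \<Rightarrow> ('a \<Rightarrow> real) \<Rightarrow> bool) \<Rightarrow> bool" where
  "PC M pr \<longleftrightarrow> (\<forall>fs f g. (\<forall>n. fs n \<in> Linf M) \<longrightarrow> f \<in> Linf M \<longrightarrow> g \<in> Linf M \<longrightarrow>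
     (\<exists>C. \<forall>n. \<forall>x\<in>space M. \<bar>fs n x\<bar> \<le> C) \<longrightarrow>
     (\<forall>x\<in>space M. (\<lambda>n. fs n x) \<longlonglongrightarrow> f x) \<longrightarrow>
     (strict_pref pr g f \<longrightarrow> (\<exists>N. \<forall>n>N. strict_pref pr g (fs n))) \<and>
     (strict_pref pr f g \<longrightarrow> (\<exists>N. \<forall>n>N. strict_pref pr (fs n) g)))"

text \<open>Conditional Chisini mean m(f | G), G given by the sub-sigma-algebra measure N.\<close>
definition chisini :: "'a measure \<Rightarrow> (('a \<Rightarrow> real) \<Rightarrow> ('a \<Rightarrow> real) \<Rightarrow> bool) \<Rightarrow> ('a \<Rightarrow> real) \<Rightarrow> ('a \<Rightarrow> real) set" where
  "chisini N pr f = {g \<in> Linf N. \<forall>A\<in>sets N. indiff pr (restr A f) (restr A g)}"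

end

theory Submission
  imports Defs
begin

text \<open>
  The Chisini mean is built as a conditional essential supremum. For each level t, an exhaustion
  argument, with the capacity \<open>A \<mapsto> sup {t \<le> 1. 1\<^sub>A \<succeq> t}\<close> in place of a measure, yields a
  G-event \<open>E\<^sub>t\<close> that is maximal up to null events among the G-events on every G-subevent of which
  f is preferred to the constant t; then g(x) is the supremum of the rationals q with \<open>x \<in> E\<^sub>q\<close>.
  The sure-thing principle and pointwise continuity aggregate comparisons over countable
  G-partitions and pass them to limits of G-simple approximations, so comparing f with g on a
  G-event reduces to comparing f with constants on G-events where g lies above or below them.
  Uniqueness: two Chisini means are indifferent on every G-event, which by strict monotonicity
  makes each event \<open>{g' \<le> q < q' \<le> g}\<close> with rational q, q' null; countably many of them
  cover \<open>{g \<noteq> g'}\<close>.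
\<close>

section \<open>Bounded measurable functions\<close>

definition const_on :: "'a measure \<Rightarrow> real \<Rightarrow> 'a \<Rightarrow> real" where
  "const_on M c = (\<lambda>x. c * indicator (space M) x)"

lemma LinfI:
  assumes "f \<in> borel_measurable M" "\<And>x. x \<in> space M \<Longrightarrow> \<bar>f x\<bar> \<le> R"
    "\<And>x. x \<notin> space M \<Longrightarrow> f x = 0"
  shows "f \<in> Linf M"
  unfolding Linf_def bounded_iff using assms by auto

lemma LinfE:
  assumes "f \<in> Linf M"
  obtains R where "R \<ge> 0" "\<And>x. x \<in> space M \<Longrightarrow> \<bar>f x\<bar> \<le> R"
  using assms unfolding Linf_def bounded_iff
  by (auto simp: image_iff) (metis abs_ge_zero order.trans real_norm_def)

lemma Linf_measurable: "f \<in> Linf M \<Longrightarrow> f \<in> borel_measurable M"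
  by (simp add: Linf_def)

lemma Linf_outside: "f \<in> Linf M \<Longrightarrow> x \<notin> space M \<Longrightarrow> f x = 0"
  by (simp add: Linf_def)

lemma zero_in_Linf: "(\<lambda>_. 0) \<in> Linf M"
  by (rule LinfI[where R=0]) auto

lemma const_on_in_Linf: "const_on M c \<in> Linf M"
  by (rule LinfI[where R="\<bar>c\<bar>"]) (auto simp: const_on_def indicator_def)

lemma indicator_in_Linf: "A \<in> sets M \<Longrightarrow> indicator A \<in> Linf M"
  by (rule LinfI[where R=1]) (auto simp: indicator_def dest: sets.sets_into_space)

lemma uminus_in_Linf: "f \<in> Linf M \<Longrightarrow> (\<lambda>x. - f x) \<in> Linf M"
  unfolding Linf_def bounded_iff by (auto simp: image_iff)

lemma restr_in_Linf:
  assumes f: "f \<in> Linf M" and A: "A \<in> sets M"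
  shows "restr A f \<in> Linf M"
proof -
  obtain R where "R \<ge> 0" "\<And>x. x \<in> space M \<Longrightarrow> \<bar>f x\<bar> \<le> R" using LinfE[OF f] by blast
  moreover have [measurable]: "f \<in> borel_measurable M" "A \<in> sets M"
    using f A by (auto intro: Linf_measurable)
  ultimately show ?thesis
    unfolding restr_def
    by (intro LinfI[where R=R]) (auto simp: indicator_def Linf_outside[OF f])
qed

lemma paste_in_Linf:
  assumes f: "f \<in> Linf M" and g: "g \<in> Linf M" and A: "A \<in> sets M"
  shows "paste M A f g \<in> Linf M"
proof -
  obtain R S where "R \<ge> 0" "\<And>x. x \<in> space M \<Longrightarrow> \<bar>f x\<bar> \<le> R"
    and "S \<ge> 0" "\<And>x. x \<in> space M \<Longrightarrow> \<bar>g x\<bar> \<le> S"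
    using LinfE[OF f] LinfE[OF g] by metis
  moreover have [measurable]: "f \<in> borel_measurable M" "g \<in> borel_measurable M" "A \<in> sets M"
    using f g A by (auto intro: Linf_measurable)
  ultimately show ?thesis
    unfolding paste_def
    by (intro LinfI[where R="R + S"])
       (auto simp: indicator_def Linf_outside[OF f] Linf_outside[OF g] intro: add_increasing add_increasing2)
qed

lemma Linf_subalgebra: "subalgebra M N \<Longrightarrow> f \<in> Linf N \<Longrightarrow> f \<in> Linf M"
  unfolding Linf_def subalgebra_def by (auto intro: measurable_from_subalg[unfolded subalgebra_def])

lemma restr_space: "f \<in> Linf M \<Longrightarrow> restr (space M) f = f"
  by (rule ext) (auto simp: restr_def indicator_def Linf_outside)

lemma paste_zero: "paste M A f (\<lambda>_. 0) = restr A f"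
  by (simp add: paste_def restr_def)

lemma restr_empty: "restr {} f = (\<lambda>_. 0)"
  by (simp add: restr_def)

lemma restr_const_on: "A \<subseteq> space M \<Longrightarrow> restr A (const_on M c) = restr A (\<lambda>_. c)"
  by (rule ext) (auto simp: restr_def const_on_def indicator_def)

lemma const_on_zero: "const_on M 0 = (\<lambda>_. 0)"
  by (simp add: const_on_def)

lemma restr_zero: "restr A (\<lambda>_. 0) = (\<lambda>_. 0)"
  by (simp add: restr_def)

lemma paste_same: "g \<in> Linf M \<Longrightarrow> A \<subseteq> space M \<Longrightarrow> paste M A g g = g"
  by (rule ext) (auto simp: paste_def indicator_def Linf_outside)

lemma level_set_in_sets:
  fixes s :: "'a \<Rightarrow> real"
  assumes "s \<in> borel_measurable N" "A \<in> sets N"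
  shows "{x \<in> A. s x = c} \<in> sets N"
proof -
  have "{x \<in> space N. s x = c} \<in> sets N" using assms(1) by measurable
  then have "A \<inter> {x \<in> space N. s x = c} \<in> sets N" using assms(2) by blast
  moreover have "{x \<in> A. s x = c} = A \<inter> {x \<in> space N. s x = c}"
    using sets.sets_into_space[OF assms(2)] by auto
  ultimately show ?thesis by simp
qed

lemma restr_const_on_one: "A \<subseteq> space M \<Longrightarrow> restr A (const_on M 1) = indicator A"
  by (rule ext) (auto simp: restr_def const_on_def indicator_def)

section \<open>Aggregation, continuity and null events\<close>

locale continuous_sure_thing =
  fixes M :: "'a measure" and pr :: "('a \<Rightarrow> real) \<Rightarrow> ('a \<Rightarrow> real) \<Rightarrow> bool"
  assumes order: "preference_order M pr" and sure_thing: "ST M pr" and continuity: "PC M pr"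
begin

lemma pr_total: "f \<in> Linf M \<Longrightarrow> g \<in> Linf M \<Longrightarrow> pr f g \<or> pr g f"
  using order unfolding preference_order_def by blast

lemma pr_trans:
  "pr f g \<Longrightarrow> pr g h \<Longrightarrow> f \<in> Linf M \<Longrightarrow> g \<in> Linf M \<Longrightarrow> h \<in> Linf M \<Longrightarrow> pr f h"
  using order unfolding preference_order_def by blast

lemma pr_refl: "f \<in> Linf M \<Longrightarrow> pr f f"
  using pr_total by blast

lemma not_pr_iff_strict_pref: "f \<in> Linf M \<Longrightarrow> g \<in> Linf M \<Longrightarrow> \<not> pr f g \<longleftrightarrow> strict_pref pr g f"
  using pr_total by (auto simp: strict_pref_def)

lemma pr_sure_thing:
  "pr (paste M A f h) (paste M A g h) \<Longrightarrow> A \<in> sets M \<Longrightarrow> f \<in> Linf M \<Longrightarrow> g \<in> Linf M \<Longrightarrow>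
    h \<in> Linf M \<Longrightarrow> h' \<in> Linf M \<Longrightarrow> pr (paste M A f h') (paste M A g h')"
  using sure_thing unfolding ST_def by blast

lemma eventually_strict_pref:
  assumes "\<And>n. fs n \<in> Linf M" "f \<in> Linf M" "g \<in> Linf M"
    and "\<And>n x. x \<in> space M \<Longrightarrow> \<bar>fs n x\<bar> \<le> C"
    and "\<And>x. x \<in> space M \<Longrightarrow> (\<lambda>n. fs n x) \<longlonglongrightarrow> f x"
  shows "strict_pref pr g f \<Longrightarrow> \<exists>N. \<forall>n>N. strict_pref pr g (fs n)"
    and "strict_pref pr f g \<Longrightarrow> \<exists>N. \<forall>n>N. strict_pref pr (fs n) g"
  using continuity assms unfolding PC_def by blast+

lemma pr_limit_ge:
  assumes fs: "\<And>n. fs n \<in> Linf M" and f: "f \<in> Linf M" and k: "k \<in> Linf M"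
    and bound: "\<And>n x. x \<in> space M \<Longrightarrow> \<bar>fs n x\<bar> \<le> C"
    and lim: "\<And>x. x \<in> space M \<Longrightarrow> (\<lambda>n. fs n x) \<longlonglongrightarrow> f x"
    and ge: "\<And>n. pr (fs n) k"
  shows "pr f k"
proof (rule ccontr)
  assume "\<not> pr f k"
  then obtain N where "\<forall>n>N. strict_pref pr k (fs n)"
    using eventually_strict_pref(1)[OF fs f k bound lim] not_pr_iff_strict_pref[OF f k] by blast
  then show False using ge[of "Suc N"] by (auto simp: strict_pref_def)
qed

lemma pr_limit_le:
  assumes fs: "\<And>n. fs n \<in> Linf M" and f: "f \<in> Linf M" and k: "k \<in> Linf M"
    and bound: "\<And>n x. x \<in> space M \<Longrightarrow> \<bar>fs n x\<bar> \<le> C"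
    and lim: "\<And>x. x \<in> space M \<Longrightarrow> (\<lambda>n. fs n x) \<longlonglongrightarrow> f x"
    and le: "\<And>n. pr k (fs n)"
  shows "pr k f"
proof (rule ccontr)
  assume "\<not> pr k f"
  then obtain N where "\<forall>n>N. strict_pref pr (fs n) k"
    using eventually_strict_pref(2)[OF fs f k bound lim] not_pr_iff_strict_pref[OF k f] by blast
  then show False using le[of "Suc N"] by (auto simp: strict_pref_def)
qed

text \<open>The sure-thing principle lets the comparison on X be made with \<open>a\<close> frozen on Y and the one
  on Y with \<open>b\<close> frozen on X; transitivity chains them.\<close>
lemma pr_restr_Un:
  assumes X: "X \<in> sets M" and Y: "Y \<in> sets M" and disj: "X \<inter> Y = {}"
    and a: "a \<in> Linf M" and b: "b \<in> Linf M"
    and "pr (restr X a) (restr X b)" and "pr (restr Y a) (restr Y b)"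
  shows "pr (restr (X \<union> Y) a) (restr (X \<union> Y) b)"
proof -
  have XY: "X \<subseteq> space M" "Y \<subseteq> space M" using X Y sets.sets_into_space by auto
  have Ya: "restr Y a \<in> Linf M" and Xb: "restr X b \<in> Linf M"
    using restr_in_Linf a b X Y by auto
  have "pr (paste M X a (restr Y a)) (paste M X b (restr Y a))"
    using pr_sure_thing[of X a "\<lambda>_. 0" b "restr Y a"] assms Ya by (simp add: paste_zero zero_in_Linf)
  moreover have "pr (paste M Y a (restr X b)) (paste M Y b (restr X b))"
    using pr_sure_thing[of Y a "\<lambda>_. 0" b "restr X b"] assms Xb by (simp add: paste_zero zero_in_Linf)
  moreover have "paste M X a (restr Y a) = restr (X \<union> Y) a"
    and "paste M X b (restr Y a) = paste M Y a (restr X b)"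
    and "paste M Y b (restr X b) = restr (X \<union> Y) b"
    using XY disj by (auto intro!: ext simp: paste_def restr_def indicator_def)
  moreover have "restr (X \<union> Y) a \<in> Linf M" "paste M Y a (restr X b) \<in> Linf M"
    "restr (X \<union> Y) b \<in> Linf M"
    using a b X Y Xb by (auto intro!: restr_in_Linf paste_in_Linf)
  ultimately show ?thesis using pr_trans by metis
qed

lemma pr_restr_UN_finite:
  assumes "finite I" "\<And>i. i \<in> I \<Longrightarrow> X i \<in> sets M" "disjoint_family_on X I"
    and a: "a \<in> Linf M" and b: "b \<in> Linf M"
    and "\<And>i. i \<in> I \<Longrightarrow> pr (restr (X i) a) (restr (X i) b)"
  shows "pr (restr (\<Union>i\<in>I. X i) a) (restr (\<Union>i\<in>I. X i) b)"
  using assms(1-3,6)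
proof (induction I rule: finite_induct)
  case empty
  then show ?case using pr_refl[OF zero_in_Linf] by (simp add: restr_empty)
next
  case (insert i I)
  have "X i \<inter> (\<Union>j\<in>I. X j) = {}"
    using insert.prems(2) insert.hyps(2) unfolding disjoint_family_on_def by auto
  moreover have "(\<Union>j\<in>I. X j) \<in> sets M"
    using insert.prems(1) insert.hyps(1) by (intro sets.finite_UN) auto
  ultimately show ?case
    using pr_restr_Un[OF _ _ _ a b] insert by (auto simp: disjoint_family_on_def)
qed

lemma pr_restr_UN:
  fixes X :: "nat \<Rightarrow> 'a set"
  assumes X: "\<And>n. X n \<in> sets M" and disj: "disjoint_family X"
    and a: "a \<in> Linf M" and b: "b \<in> Linf M"
    and pr_X: "\<And>n. pr (restr (X n) a) (restr (X n) b)"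
  shows "pr (restr (\<Union>n. X n) a) (restr (\<Union>n. X n) b)"
proof -
  define U where "U = (\<Union>n. X n)"
  define V where "V n = (\<Union>i<n. X i)" for n
  have U: "U \<in> sets M" and V: "V n \<in> sets M" for n
    unfolding U_def V_def using X by auto
  have Ub: "restr U b \<in> Linf M" using restr_in_Linf[OF b U] .
  obtain Ra Rb where Ra: "Ra \<ge> 0" "\<And>x. x \<in> space M \<Longrightarrow> \<bar>a x\<bar> \<le> Ra"
    and Rb: "Rb \<ge> 0" "\<And>x. x \<in> space M \<Longrightarrow> \<bar>b x\<bar> \<le> Rb"
    using LinfE[OF a] LinfE[OF b] by metis
  \<comment> \<open>Approximate \<open>restr U a\<close> by pasting \<open>a\<close> on the finite unions into \<open>restr U b\<close>.\<close>
  define fs where "fs n = paste M (V n) a (restr U b)" for n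
  have "pr (restr (V n) a) (restr (V n) b)" for n
    unfolding V_def using X disj a b pr_X
    by (intro pr_restr_UN_finite) (auto simp: disjoint_family_on_def)
  then have "pr (fs n) (paste M (V n) b (restr U b))" for n
    using pr_sure_thing[OF _ V a b zero_in_Linf Ub] unfolding fs_def by (simp add: paste_zero)
  moreover have "paste M (V n) b (restr U b) = restr U b" for n
    using sets.sets_into_space[OF U] unfolding V_def U_def
    by (force intro!: ext simp: paste_def restr_def indicator_def)
  ultimately have ge: "pr (fs n) (restr U b)" for n by simp
  have bound: "\<bar>fs n x\<bar> \<le> Ra + Rb" if "x \<in> space M" for n x
    using Ra(1) Rb(1) Ra(2)[OF that] Rb(2)[OF that] unfolding fs_def paste_def restr_def
    by (auto simp: indicator_def)
  have fs: "fs n \<in> Linf M" for n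
    unfolding fs_def using paste_in_Linf[OF a Ub V] .
  have lim: "(\<lambda>n. fs n x) \<longlonglongrightarrow> restr U a x" for x
  proof (cases "x \<in> U")
    case True
    then obtain i where "x \<in> X i" unfolding U_def by auto
    then have "\<forall>n\<ge>Suc i. fs n x = restr U a x"
      using True unfolding fs_def paste_def restr_def V_def by (auto simp: indicator_def)
    then show ?thesis by (intro tendsto_eventually eventually_sequentiallyI) blast
  next
    case False
    then have "fs n x = restr U a x" for n
      unfolding fs_def paste_def restr_def U_def V_def by (auto simp: indicator_def)
    then show ?thesis by simp
  qed
  show ?thesis
    using pr_limit_ge[OF fs restr_in_Linf[OF a U] Ub bound lim ge] unfolding U_def .
qed

lemma null_events_iff_restr:
  "A \<in> null_events M pr \<longleftrightarrow> A \<in> sets M \<and> (\<forall>f\<in>Linf M. \<forall>g\<in>Linf M. pr (restr A f) (restr A g))"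
proof
  assume null: "A \<in> null_events M pr"
  then have A: "A \<in> sets M" by (simp add: null_events_def)
  have "indiff pr (paste M A f (\<lambda>_. 0)) (\<lambda>_. 0)" if "f \<in> Linf M" for f
    using null that zero_in_Linf unfolding null_events_def by blast
  then have zero: "indiff pr (restr A f) (\<lambda>_. 0)" if "f \<in> Linf M" for f
    using that by (simp add: paste_zero)
  have "pr (restr A f) (restr A g)" if f: "f \<in> Linf M" and g: "g \<in> Linf M" for f g
    using pr_trans[OF _ _ restr_in_Linf[OF f A] zero_in_Linf restr_in_Linf[OF g A]] zero[OF f] zero[OF g]
    unfolding indiff_def by blast
  with A show "A \<in> sets M \<and> (\<forall>f\<in>Linf M. \<forall>g\<in>Linf M. pr (restr A f) (restr A g))"
    by blast
next
  assume "A \<in> sets M \<and> (\<forall>f\<in>Linf M. \<forall>g\<in>Linf M. pr (restr A f) (restr A g))"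
  then have A: "A \<in> sets M"
    and pr_A: "\<And>f g. f \<in> Linf M \<Longrightarrow> g \<in> Linf M \<Longrightarrow> pr (restr A f) (restr A g)"
    by auto
  have "pr (paste M A f g) g \<and> pr g (paste M A f g)" if f: "f \<in> Linf M" and g: "g \<in> Linf M" for f g
  proof -
    have "pr (paste M A f g) (paste M A g g)" "pr (paste M A g g) (paste M A f g)"
      using pr_sure_thing[OF _ A f g zero_in_Linf g] pr_sure_thing[OF _ A g f zero_in_Linf g]
        pr_A[OF f g] pr_A[OF g f]
      by (simp_all add: paste_zero)
    then show ?thesis using paste_same[OF g sets.sets_into_space[OF A]] by simp
  qed
  then show "A \<in> null_events M pr"
    using A by (simp add: null_events_def indiff_def)
qed

lemma null_events_sets: "A \<in> null_events M pr \<Longrightarrow> A \<in> sets M"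
  by (simp add: null_events_def)

lemma pr_restr_null: "A \<in> null_events M pr \<Longrightarrow> f \<in> Linf M \<Longrightarrow> g \<in> Linf M \<Longrightarrow> pr (restr A f) (restr A g)"
  by (simp add: null_events_iff_restr)

lemma null_events_empty: "{} \<in> null_events M pr"
  using pr_refl[OF zero_in_Linf] by (simp add: null_events_iff_restr restr_empty)

lemma null_events_subset:
  assumes B: "B \<in> sets M" and "B \<subseteq> A" and null: "A \<in> null_events M pr"
  shows "B \<in> null_events M pr"
proof -
  have "restr A (restr B f) = restr B f" for f
    using \<open>B \<subseteq> A\<close> by (auto intro!: ext simp: restr_def indicator_def)
  then have "pr (restr B f) (restr B g)" if "f \<in> Linf M" "g \<in> Linf M" for f g
    using pr_restr_null[OF null restr_in_Linf[OF that(1) B] restr_in_Linf[OF that(2) B]] by simp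
  then show ?thesis using B by (simp add: null_events_iff_restr)
qed

lemma null_events_UN:
  fixes A :: "nat \<Rightarrow> 'a set"
  assumes null: "\<And>n. A n \<in> null_events M pr"
  shows "(\<Union>n. A n) \<in> null_events M pr"
proof -
  have A: "range A \<subseteq> sets M" using null null_events_sets by auto
  have "disjointed A n \<in> null_events M pr" for n
    using null_events_subset[OF _ disjointed_subset null] sets.range_disjointed_sets[OF A] by auto
  then have "pr (restr (\<Union>n. disjointed A n) f) (restr (\<Union>n. disjointed A n) g)"
    if "f \<in> Linf M" "g \<in> Linf M" for f g
    using that by (intro pr_restr_UN disjoint_family_disjointed) (auto simp: null_events_iff_restr)
  then show ?thesis
    using A by (auto simp: null_events_iff_restr UN_disjointed_eq)
qed

lemma null_events_Un: "A \<in> null_events M pr \<Longrightarrow> B \<in> null_events M pr \<Longrightarrow> A \<union> B \<in> null_events M pr"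
  unfolding Un_range_binary by (rule null_events_UN) (simp add: binary_def)

lemma null_events_UN_countable:
  assumes "countable I" "\<And>i. i \<in> I \<Longrightarrow> A i \<in> null_events M pr"
  shows "(\<Union>i\<in>I. A i) \<in> null_events M pr"
proof (cases "I = {}")
  case True
  then show ?thesis using null_events_empty by simp
next
  case False
  have "(\<Union>i\<in>I. A i) = (\<Union>n. A (from_nat_into I n))"
    using range_from_nat_into[OF False assms(1)] by (metis image_image)
  also have "\<dots> \<in> null_events M pr"
    using assms(2) from_nat_into[OF False] by (intro null_events_UN) auto
  finally show ?thesis .
qed

lemma pr_restr_of_simple_approx:
  assumes A: "A \<in> sets M" and a: "a \<in> Linf M" and h: "h \<in> Linf M"
    and s: "\<And>n. s n \<in> Linf M" and fin: "\<And>n. finite (s n ` A)"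
    and bound: "\<And>n x. x \<in> space M \<Longrightarrow> \<bar>s n x\<bar> \<le> C"
    and lim: "\<And>x. x \<in> space M \<Longrightarrow> (\<lambda>n. s n x) \<longlonglongrightarrow> h x"
    and levels: "\<And>n c. pr (restr {x \<in> A. s n x = c} a) (restr {x \<in> A. s n x = c} (const_on M c))"
  shows "pr (restr A a) (restr A h)"
proof -
  have A_space: "A \<subseteq> space M" using sets.sets_into_space[OF A] .
  have step: "pr (restr A a) (restr A (s n))" for n
  proof -
    let ?X = "\<lambda>c. {x \<in> A. s n x = c}"
    have X: "?X c \<in> sets M" for c
      using level_set_in_sets[OF Linf_measurable[OF s] A] .
    have "restr (?X c) (const_on M c) = restr (?X c) (s n)" for c
      using A_space by (auto intro!: ext simp: restr_def const_on_def indicator_def)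
    then have "pr (restr (?X c) a) (restr (?X c) (s n))" for c
      using levels[of n c] by simp
    then have "pr (restr (\<Union>c\<in>s n ` A. ?X c) a) (restr (\<Union>c\<in>s n ` A. ?X c) (s n))"
      using X a s fin by (intro pr_restr_UN_finite) (auto simp: disjoint_family_on_def)
    moreover have "(\<Union>c\<in>s n ` A. ?X c) = A" by auto
    ultimately show ?thesis by simp
  qed
  have bound_restr: "\<bar>restr A (s n) x\<bar> \<le> C" if "x \<in> space M" for n x
    using bound[OF that] order_trans[OF abs_ge_zero bound[OF that]]
    by (auto simp: restr_def indicator_def)
  have lim_restr: "(\<lambda>n. restr A (s n) x) \<longlonglongrightarrow> restr A h x" for x
    unfolding restr_def using lim A_space by (cases "x \<in> A") auto
  show ?thesis
    using pr_limit_le[OF restr_in_Linf[OF s A] restr_in_Linf[OF h A] restr_in_Linf[OF a A]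
        bound_restr lim_restr step] .
qed

end

section \<open>Simple approximation and rational level sets\<close>

lemma subalgebra_refl: "subalgebra M M"
  by (simp add: subalgebra_def)

lemma simple_approx_below:
  assumes h: "h \<in> Linf N"
  obtains s C where "\<And>n. s n \<in> Linf N" "\<And>n. finite (s n ` space N)"
    "\<And>n x. x \<in> space N \<Longrightarrow> s n x < h x" "\<And>n x. x \<in> space N \<Longrightarrow> \<bar>s n x\<bar> \<le> C"
    "\<And>x. (\<lambda>n. s n x) \<longlonglongrightarrow> h x"
proof -
  obtain R where R: "R \<ge> 0" "\<And>x. x \<in> space N \<Longrightarrow> \<bar>h x\<bar> \<le> R" using LinfE[OF h] by blast
  \<comment> \<open>Round \<open>h\<close> down to the grid of mesh \<open>1/(n+1)\<close>, then one more step down to get \<open>s < h\<close>.\<close>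
  define s where "s n x =
    (if x \<in> space N then (real_of_int \<lfloor>real (Suc n) * h x\<rfloor> - 1) / real (Suc n) else 0)" for n x
  have close: "h x - 2 / real (Suc n) < s n x \<and> s n x < h x" if "x \<in> space N" for n x
  proof -
    define m where "m = real (Suc n)"
    have m: "m > 0" by (simp add: m_def)
    have "(m * h x - 2) / m < (real_of_int \<lfloor>m * h x\<rfloor> - 1) / m"
      "(real_of_int \<lfloor>m * h x\<rfloor> - 1) / m < (m * h x) / m"
      by (rule divide_strict_right_mono, linarith, rule m)+
    moreover have "h x - 2 / m = (m * h x - 2) / m" "h x = (m * h x) / m"
      using m by (simp_all add: field_simps)
    moreover have "s n x = (real_of_int \<lfloor>m * h x\<rfloor> - 1) / m"
      using that by (simp add: s_def m_def)
    ultimately show ?thesis unfolding m_def[symmetric] by linarith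
  qed
  have grid: "s n x \<in> (\<lambda>k. (real_of_int k - 1) / real (Suc n)) `
      {\<lfloor>real (Suc n) * (- R)\<rfloor> .. \<lfloor>real (Suc n) * R\<rfloor>}" if "x \<in> space N" for n x
  proof (rule image_eqI)
    show "s n x = (real_of_int \<lfloor>real (Suc n) * h x\<rfloor> - 1) / real (Suc n)"
      using that by (simp add: s_def)
    have "- R \<le> h x" "h x \<le> R" using R(2)[OF that] by auto
    then have "real (Suc n) * (- R) \<le> real (Suc n) * h x" "real (Suc n) * h x \<le> real (Suc n) * R"
      by (intro mult_left_mono; simp)+
    then show "\<lfloor>real (Suc n) * h x\<rfloor> \<in> {\<lfloor>real (Suc n) * (- R)\<rfloor> .. \<lfloor>real (Suc n) * R\<rfloor>}"
      by (auto intro: floor_mono simp del: mult_minus_right of_nat_Suc)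
  qed
  have fin: "finite (s n ` space N)" for n
    by (rule finite_subset[OF image_subsetI[OF grid] finite_imageI[OF finite_atLeastAtMost_int]])
  have bound: "\<bar>s n x\<bar> \<le> R + 2" if "x \<in> space N" for n x
  proof -
    have "2 / real (Suc n) \<le> 2" by (simp add: field_simps)
    then show ?thesis using close[OF that, of n] R(2)[OF that] by linarith
  qed
  have Linf: "s n \<in> Linf N" for n
  proof (rule LinfI[OF _ bound])
    have [measurable]: "h \<in> borel_measurable N" using Linf_measurable[OF h] .
    show "s n \<in> borel_measurable N" unfolding s_def by measurable
    show "s n x = 0" if "x \<notin> space N" for x using that by (simp add: s_def)
  qed
  have lim: "(\<lambda>n. s n x) \<longlonglongrightarrow> h x" for x
  proof (cases "x \<in> space N")
    case True
    show ?thesis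
    proof (rule real_tendsto_sandwich)
      show "\<forall>\<^sub>F n in sequentially. h x - 2 / real (Suc n) \<le> s n x"
        "\<forall>\<^sub>F n in sequentially. s n x \<le> h x"
        using close[OF True] by (auto intro: always_eventually less_imp_le)
      show "(\<lambda>n. h x - 2 / real (Suc n)) \<longlonglongrightarrow> h x"
        using tendsto_diff[OF tendsto_const LIMSEQ_Suc[OF lim_const_over_n]] by simp
    qed simp
  next
    case False
    then show ?thesis using Linf_outside[OF h False] by (simp add: s_def)
  qed
  show ?thesis
    using close by (intro that[of s "R + 2", OF Linf fin _ bound lim]) blast
qed

lemma simple_approx_above:
  assumes h: "h \<in> Linf N"
  obtains s C where "\<And>n. s n \<in> Linf N" "\<And>n. finite (s n ` space N)"
    "\<And>n x. x \<in> space N \<Longrightarrow> h x < s n x" "\<And>n x. x \<in> space N \<Longrightarrow> \<bar>s n x\<bar> \<le> C"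
    "\<And>x. (\<lambda>n. s n x) \<longlonglongrightarrow> h x"
proof -
  obtain s C where s: "\<And>n. s n \<in> Linf N" "\<And>n. finite (s n ` space N)"
    "\<And>n x. x \<in> space N \<Longrightarrow> s n x < - h x" "\<And>n x. x \<in> space N \<Longrightarrow> \<bar>s n x\<bar> \<le> C"
    "\<And>x. (\<lambda>n. s n x) \<longlonglongrightarrow> - h x"
    using simple_approx_below[OF uminus_in_Linf[OF h]] by blast
  have "finite ((\<lambda>x. - s n x) ` space N)" for n
    using finite_imageI[OF s(2), of uminus] by (simp add: image_image)
  moreover have "(\<lambda>n. - s n x) \<longlonglongrightarrow> h x" for x
    using tendsto_minus[OF s(5)] by simp
  moreover have "h x < - s n x" if "x \<in> space N" for n x
    using s(3)[OF that, of n] by linarith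
  ultimately show ?thesis
    using s by (intro that[of "\<lambda>n x. - s n x" C]) (auto intro: uminus_in_Linf)
qed

text \<open>The supremum of the rationals q in [-R, R] with x \<in> E q; the value -R is included so that
  the supremum is never taken over the empty set.\<close>
lemma sup_of_rational_levels:
  fixes E :: "real \<Rightarrow> 'a set"
  assumes E: "\<And>q. E q \<in> sets N" and R: "0 \<le> R"
  obtains g where "g \<in> Linf N"
    "\<And>q x. q \<in> \<rat> \<Longrightarrow> q \<le> R \<Longrightarrow> x \<in> E q \<Longrightarrow> x \<in> space N \<Longrightarrow> q \<le> g x"
    "\<And>x t. x \<in> space N \<Longrightarrow> - R \<le> t \<Longrightarrow> t < g x \<Longrightarrow> \<exists>q\<in>\<rat>. q \<le> R \<and> t < q \<and> x \<in> E q"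
proof -
  define Q where "Q = {q \<in> \<rat>. - R \<le> q \<and> q \<le> R}"
  define T where "T x = insert (- R) {q \<in> Q. x \<in> E q}" for x
  define g where "g x = (if x \<in> space N then Sup (T x) else 0)" for x
  have T: "T x \<noteq> {}" "bdd_above (T x)" for x
    using R by (auto simp: T_def Q_def intro: bdd_aboveI[where M=R])
  have bounds: "- R \<le> g x \<and> g x \<le> R" if "x \<in> space N" for x
  proof -
    have "- R \<le> Sup (T x)" by (rule cSup_upper[OF _ T(2)]) (simp add: T_def)
    moreover have "Sup (T x) \<le> R" by (rule cSup_least[OF T(1)]) (use R in \<open>auto simp: T_def Q_def\<close>)
    ultimately show ?thesis using that by (simp add: g_def)
  qed
  have lower: "q \<le> g x" if "q \<in> \<rat>" "q \<le> R" "x \<in> E q" "x \<in> space N" for q x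
  proof (cases "q < - R")
    case True
    then show ?thesis using bounds[OF that(4)] by linarith
  next
    case False
    then have "q \<in> T x" using that by (auto simp: T_def Q_def)
    then show ?thesis using that(4) cSup_upper[OF _ T(2)] by (simp add: g_def)
  qed
  have upper: "\<exists>q\<in>\<rat>. q \<le> R \<and> t < q \<and> x \<in> E q" if "x \<in> space N" "- R \<le> t" "t < g x" for x t
  proof -
    have "t < Sup (T x)" using that by (simp add: g_def)
    then obtain q where "q \<in> T x" "t < q" using less_cSup_iff[OF T] by blast
    then show ?thesis using that(2) by (auto simp: T_def Q_def)
  qed
  have "{x \<in> space N. a < g x} \<in> sets N" for a
  proof (cases "a < - R")
    case True
    then have "{x \<in> space N. a < g x} = space N" using bounds by fastforce
    then show ?thesis by simp
  next
    case False
    have "{x \<in> space N. a < g x} = (\<Union>q\<in>{q \<in> Q. a < q}. E q \<inter> space N)"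
    proof (intro equalityI subsetI)
      fix x assume "x \<in> {x \<in> space N. a < g x}"
      then show "x \<in> (\<Union>q\<in>{q \<in> Q. a < q}. E q \<inter> space N)"
        using upper[of x a] False by (force simp: Q_def)
    next
      fix x assume "x \<in> (\<Union>q\<in>{q \<in> Q. a < q}. E q \<inter> space N)"
      then show "x \<in> {x \<in> space N. a < g x}"
        using lower by (force simp: Q_def)
    qed
    also have "\<dots> \<in> sets N"
      using E by (intro sets.countable_UN'' countable_subset[OF _ countable_rat]) (auto simp: Q_def)
    finally show ?thesis .
  qed
  then have "g \<in> borel_measurable N" by (rule borel_measurable_iff_greater[THEN iffD2, OF allI])
  moreover have "\<bar>g x\<bar> \<le> R" if "x \<in> space N" for x
    using bounds[OF that] by (simp add: abs_le_iff)
  ultimately have "g \<in> Linf N"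
    by (intro LinfI[where R=R]) (auto simp: g_def)
  then show ?thesis using that lower upper by blast
qed

section \<open>Monotone preferences\<close>

locale preference = continuous_sure_thing +
  assumes strict_monotone: "SM M pr"

text \<open>All axioms but strict monotonicity are symmetric in the two arguments of \<open>pr\<close>, so the
  aggregation and approximation lemmas also hold for the converse relation.\<close>
sublocale preference \<subseteq> converse: continuous_sure_thing M "\<lambda>f g. pr g f"
proof
  show "preference_order M (\<lambda>f g. pr g f)"
    using order unfolding preference_order_def by blast
  show "ST M (\<lambda>f g. pr g f)"
    using sure_thing unfolding ST_def by blast
  show "PC M (\<lambda>f g. pr g f)"
    using continuity unfolding PC_def strict_pref_def by blast
qed

context preference
begin

lemma strict_pref_restr_const:
  assumes B: "B \<in> sets M" "B \<notin> null_events M pr" and "y < x"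
  shows "strict_pref pr (restr B (const_on M x)) (restr B (const_on M y))"
  using strict_monotone[unfolded SM_def, rule_format, OF B zero_in_Linf \<open>y < x\<close>]
    sets.sets_into_space[OF B(1)]
  by (simp add: paste_zero restr_const_on)

lemma pr_restr_const_mono:
  assumes B: "B \<in> sets M" and "y \<le> x"
  shows "pr (restr B (const_on M x)) (restr B (const_on M y))"
proof (cases "B \<in> null_events M pr")
  case True
  then show ?thesis using pr_restr_null[OF True const_on_in_Linf const_on_in_Linf] by blast
next
  case False
  show ?thesis
  proof (cases "x = y")
    case True
    then show ?thesis using pr_refl[OF restr_in_Linf[OF const_on_in_Linf B]] by simp
  next
    case False
    then show ?thesis
      using strict_pref_restr_const[OF B \<open>B \<notin> null_events M pr\<close>] \<open>y \<le> x\<close>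
      by (auto simp: strict_pref_def)
  qed
qed

text \<open>Approximating h by N-simple functions from below reduces the comparison of a with h on A
  to comparisons with constants on N-measurable pieces of A.\<close>
lemma pr_restr_ge_of_const_below:
  assumes N: "subalgebra M N" and h: "h \<in> Linf N" and A: "A \<in> sets N" and a: "a \<in> Linf M"
    and below: "\<And>B c. B \<in> sets N \<Longrightarrow> B \<subseteq> A \<Longrightarrow> (\<And>x. x \<in> B \<Longrightarrow> c < h x) \<Longrightarrow>
      pr (restr B a) (restr B (const_on M c))"
  shows "pr (restr A a) (restr A h)"
proof -
  have space: "space N = space M" and A_M: "A \<in> sets M" using N A by (auto simp: subalgebra_def)
  have A_space: "A \<subseteq> space M" using sets.sets_into_space[OF A_M] .
  obtain s C where s: "\<And>n. s n \<in> Linf N" "\<And>n. finite (s n ` space N)"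
    "\<And>n x. x \<in> space N \<Longrightarrow> s n x < h x" "\<And>n x. x \<in> space N \<Longrightarrow> \<bar>s n x\<bar> \<le> C"
    "\<And>x. (\<lambda>n. s n x) \<longlonglongrightarrow> h x"
    using simple_approx_below[OF h] by blast
  show ?thesis
  proof (rule pr_restr_of_simple_approx[OF A_M a Linf_subalgebra[OF N h] Linf_subalgebra[OF N s(1)]])
    show "finite (s n ` A)" for n
      using finite_subset[OF image_mono s(2)] A_space space by blast
    show "\<bar>s n x\<bar> \<le> C" "(\<lambda>n. s n x) \<longlonglongrightarrow> h x" if "x \<in> space M" for n x
      using s(4,5) that space by auto
    show "pr (restr {x \<in> A. s n x = c} a) (restr {x \<in> A. s n x = c} (const_on M c))" for n c
      using s(3) A_space space
      by (intro below level_set_in_sets[OF Linf_measurable[OF s(1)] A]) auto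
  qed
qed

lemma pr_restr_le_of_const_above:
  assumes N: "subalgebra M N" and h: "h \<in> Linf N" and A: "A \<in> sets N" and a: "a \<in> Linf M"
    and above: "\<And>B c. B \<in> sets N \<Longrightarrow> B \<subseteq> A \<Longrightarrow> (\<And>x. x \<in> B \<Longrightarrow> h x < c) \<Longrightarrow>
      pr (restr B (const_on M c)) (restr B a)"
  shows "pr (restr A h) (restr A a)"
proof -
  have space: "space N = space M" and A_M: "A \<in> sets M" using N A by (auto simp: subalgebra_def)
  have A_space: "A \<subseteq> space M" using sets.sets_into_space[OF A_M] .
  obtain s C where s: "\<And>n. s n \<in> Linf N" "\<And>n. finite (s n ` space N)"
    "\<And>n x. x \<in> space N \<Longrightarrow> h x < s n x" "\<And>n x. x \<in> space N \<Longrightarrow> \<bar>s n x\<bar> \<le> C"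
    "\<And>x. (\<lambda>n. s n x) \<longlonglongrightarrow> h x"
    using simple_approx_above[OF h] by blast
  show ?thesis
  proof (rule converse.pr_restr_of_simple_approx[OF A_M a Linf_subalgebra[OF N h]
        Linf_subalgebra[OF N s(1)]])
    show "finite (s n ` A)" for n
      using finite_subset[OF image_mono s(2)] A_space space by blast
    show "\<bar>s n x\<bar> \<le> C" "(\<lambda>n. s n x) \<longlonglongrightarrow> h x" if "x \<in> space M" for n x
      using s(4,5) that space by auto
    show "pr (restr {x \<in> A. s n x = c} (const_on M c)) (restr {x \<in> A. s n x = c} a)" for n c
      using s(3) A_space space
      by (intro above level_set_in_sets[OF Linf_measurable[OF s(1)] A]) auto
  qed
qed

lemma pr_restr_ge_const:
  assumes B: "B \<in> sets M" and a: "a \<in> Linf M" and ge: "\<And>x. x \<in> B \<Longrightarrow> c \<le> a x"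
  shows "pr (restr B a) (restr B (const_on M c))"
proof (rule pr_restr_le_of_const_above[OF subalgebra_refl a B const_on_in_Linf])
  fix B' c' assume B': "B' \<in> sets M" "B' \<subseteq> B" and less: "\<And>x. x \<in> B' \<Longrightarrow> a x < c'"
  show "pr (restr B' (const_on M c')) (restr B' (const_on M c))"
  proof (cases "B' = {}")
    case True
    then show ?thesis using pr_refl[OF zero_in_Linf] by (simp add: restr_empty)
  next
    case False
    then obtain x where "x \<in> B'" by auto
    then have "c \<le> c'" using ge[of x] less[of x] B'(2) by auto
    then show ?thesis using pr_restr_const_mono[OF B'(1)] by blast
  qed
qed

lemma pr_restr_le_const:
  assumes B: "B \<in> sets M" and a: "a \<in> Linf M" and le: "\<And>x. x \<in> B \<Longrightarrow> a x \<le> c"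
  shows "pr (restr B (const_on M c)) (restr B a)"
proof (rule pr_restr_ge_of_const_below[OF subalgebra_refl a B const_on_in_Linf])
  fix B' c' assume B': "B' \<in> sets M" "B' \<subseteq> B" and less: "\<And>x. x \<in> B' \<Longrightarrow> c' < a x"
  show "pr (restr B' (const_on M c)) (restr B' (const_on M c'))"
  proof (cases "B' = {}")
    case True
    then show ?thesis using pr_refl[OF zero_in_Linf] by (simp add: restr_empty)
  next
    case False
    then obtain x where "x \<in> B'" by auto
    then have "c' \<le> c" using le[of x] less[of x] B'(2) by auto
    then show ?thesis using pr_restr_const_mono[OF B'(1)] by blast
  qed
qed

lemma pr_restr_mono:
  assumes B: "B \<in> sets M" and a: "a \<in> Linf M" and b: "b \<in> Linf M"
    and le: "\<And>x. x \<in> B \<Longrightarrow> b x \<le> a x"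
  shows "pr (restr B a) (restr B b)"
proof (rule pr_restr_ge_of_const_below[OF subalgebra_refl b B a])
  fix B' c assume B': "B' \<in> sets M" "B' \<subseteq> B" and less: "\<And>x. x \<in> B' \<Longrightarrow> c < b x"
  show "pr (restr B' a) (restr B' (const_on M c))"
  proof (rule pr_restr_ge_const[OF B'(1) a])
    fix x assume "x \<in> B'"
    then show "c \<le> a x" using less[of x] le[of x] B'(2) by auto
  qed
qed

section \<open>Capacity and exhaustion\<close>

lemma pr_const_mono: "y \<le> x \<Longrightarrow> pr (const_on M x) (const_on M y)"
  using pr_restr_const_mono[OF sets.top] by (simp add: restr_space const_on_in_Linf)

lemma strict_pref_const:
  "space M \<notin> null_events M pr \<Longrightarrow> y < x \<Longrightarrow> strict_pref pr (const_on M x) (const_on M y)"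
  using strict_pref_restr_const[OF sets.top] by (simp add: restr_space const_on_in_Linf)

text \<open>The capacity plays the role of a finite measure in the exhaustion argument; the cap
  \<open>t \<le> 1\<close> keeps it finite even when every event is null.\<close>
definition capacity :: "'a set \<Rightarrow> real" where
  "capacity A = Sup {t. t \<le> 1 \<and> pr (indicator A) (const_on M t)}"

lemma pr_indicator_zero:
  assumes A: "A \<in> sets M"
  shows "pr (indicator A) (\<lambda>_. 0)"
  using pr_restr_mono[OF sets.top indicator_in_Linf[OF A] zero_in_Linf]
  by (simp add: restr_space indicator_in_Linf[OF A] zero_in_Linf)

lemma capacity_set:
  assumes "A \<in> sets M"
  shows "0 \<in> {t. t \<le> 1 \<and> pr (indicator A) (const_on M t)}"
    and "bdd_above {t. t \<le> 1 \<and> pr (indicator A) (const_on M t)}"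
  using pr_indicator_zero[OF assms] by (auto simp: const_on_zero intro: bdd_aboveI[where M=1])

lemma capacity_nonneg: "A \<in> sets M \<Longrightarrow> 0 \<le> capacity A"
  unfolding capacity_def using capacity_set by (rule cSup_upper)

lemma capacity_le_1: "A \<in> sets M \<Longrightarrow> capacity A \<le> 1"
  unfolding capacity_def using capacity_set(1) by (intro cSup_least) blast+

lemma pr_indicator_capacity:
  assumes A: "A \<in> sets M"
  shows "pr (indicator A) (const_on M (capacity A))"
proof -
  let ?T = "{t. t \<le> 1 \<and> pr (indicator A) (const_on M t)}"
  have T: "?T \<noteq> {}" "bdd_above ?T" using capacity_set[OF A] by blast+
  have "capacity A - 1 / real (Suc n) < Sup ?T" for n
    by (simp add: capacity_def)
  then have "\<exists>t\<in>?T. capacity A - 1 / real (Suc n) < t" for n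
    using less_cSup_iff[OF T] by blast
  then obtain t where t: "\<And>n. t n \<in> ?T" "\<And>n. capacity A - 1 / real (Suc n) < t n"
    by metis
  have t_le: "t n \<le> capacity A" for n
    unfolding capacity_def using t(1) T(2) by (rule cSup_upper)
  have lim: "t \<longlonglongrightarrow> capacity A"
  proof (rule real_tendsto_sandwich)
    show "\<forall>\<^sub>F n in sequentially. capacity A - 1 / real (Suc n) \<le> t n"
      "\<forall>\<^sub>F n in sequentially. t n \<le> capacity A"
      using t(2) t_le by (auto intro: always_eventually less_imp_le)
    show "(\<lambda>n. capacity A - 1 / real (Suc n)) \<longlonglongrightarrow> capacity A"
      using tendsto_diff[OF tendsto_const LIMSEQ_Suc[OF lim_const_over_n]] by simp
  qed simp
  have bound: "\<bar>t n\<bar> \<le> 2" for n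
  proof -
    have "1 / real (Suc n) \<le> 1" by simp
    moreover have "t n \<le> 1" using t(1)[of n] by simp
    ultimately show ?thesis using t(2)[of n] capacity_nonneg[OF A] by linarith
  qed
  show ?thesis
  proof (rule pr_limit_le[where C=2 and fs="\<lambda>n. const_on M (t n)",
        OF const_on_in_Linf const_on_in_Linf indicator_in_Linf[OF A]])
    show "\<bar>const_on M (t n) x\<bar> \<le> 2" for n x
      using bound[of n] by (simp add: const_on_def indicator_def)
    show "(\<lambda>n. const_on M (t n) x) \<longlonglongrightarrow> const_on M (capacity A) x" for x
      unfolding const_on_def by (intro tendsto_mult_right lim)
    show "pr (indicator A) (const_on M (t n))" for n
      using t(1)[of n] by simp
  qed
qed

lemma capacity_mono:
  assumes A: "A \<in> sets M" and B: "B \<in> sets M" and "A \<subseteq> B"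
  shows "capacity A \<le> capacity B"
proof -
  have "pr (restr (space M) (indicator B)) (restr (space M) (indicator A))"
    using \<open>A \<subseteq> B\<close>
    by (intro pr_restr_mono[OF sets.top indicator_in_Linf[OF B] indicator_in_Linf[OF A]])
      (auto simp: indicator_def)
  then have "pr (indicator B) (indicator A)"
    by (simp add: restr_space indicator_in_Linf[OF A] indicator_in_Linf[OF B])
  then have "{t. t \<le> 1 \<and> pr (indicator A) (const_on M t)} \<subseteq> {t. t \<le> 1 \<and> pr (indicator B) (const_on M t)}"
    using pr_trans[OF _ _ indicator_in_Linf[OF B] indicator_in_Linf[OF A] const_on_in_Linf] by blast
  then show ?thesis
    unfolding capacity_def using capacity_set[OF A] capacity_set[OF B]
    by (intro cSup_subset_mono) blast+
qed

lemma capacity_pos: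
  assumes A: "A \<in> sets M" "A \<notin> null_events M pr"
  shows "0 < capacity A"
proof -
  have "strict_pref pr (indicator A) (const_on M 0)"
    using strict_pref_restr_const[OF A, of 0 1] sets.sets_into_space[OF A(1)]
    by (simp add: restr_const_on_one const_on_zero restr_zero)
  moreover have "\<bar>const_on M (1 / real (Suc n)) x\<bar> \<le> 1" for n x
    by (simp add: const_on_def indicator_def)
  moreover have "(\<lambda>n. const_on M (1 / real (Suc n)) x) \<longlonglongrightarrow> const_on M 0 x" for x
    unfolding const_on_def by (intro tendsto_mult_right LIMSEQ_Suc[OF lim_const_over_n])
  ultimately obtain N where "\<forall>n>N. strict_pref pr (indicator A) (const_on M (1 / real (Suc n)))"
    using eventually_strict_pref(1)[where fs="\<lambda>n. const_on M (1 / real (Suc n))" and f="const_on M 0",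
        OF const_on_in_Linf const_on_in_Linf indicator_in_Linf[OF A(1)]]
    by blast
  then have "pr (indicator A) (const_on M (1 / real (Suc (Suc N))))"
    by (auto simp: strict_pref_def)
  then have "1 / real (Suc (Suc N)) \<le> capacity A"
    unfolding capacity_def using capacity_set(2)[OF A(1)] by (intro cSup_upper) auto
  moreover have "0 < 1 / real (Suc (Suc N))" by simp
  ultimately show ?thesis by linarith
qed

text \<open>The tails of a disjoint sequence shrink to the empty set, so their indicators tend to 0
  pointwise, while by monotonicity their capacities stay above \<open>\<epsilon>\<close>.\<close>
lemma disjoint_family_capacity_not_bounded_below:
  fixes C :: "nat \<Rightarrow> 'a set"
  assumes nonnull: "space M \<notin> null_events M pr"
    and C: "\<And>n. C n \<in> sets M" and disj: "disjoint_family C"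
    and "0 < \<epsilon>" and ge: "\<And>n. \<epsilon> \<le> capacity (C n)"
  shows False
proof -
  define T where "T k = (\<Union>n\<in>{k..}. C n)" for k
  have T: "T k \<in> sets M" for k
    unfolding T_def using C by (intro sets.countable_UN'') auto
  have pr_T: "pr (indicator (T k)) (const_on M \<epsilon>)" for k
  proof -
    have "C k \<subseteq> T k" by (auto simp: T_def)
    then have "\<epsilon> \<le> capacity (T k)"
      using ge[of k] capacity_mono[OF C[of k] T[of k]] by linarith
    then show ?thesis
      using pr_trans[OF pr_indicator_capacity[OF T] pr_const_mono indicator_in_Linf[OF T]
          const_on_in_Linf const_on_in_Linf] by blast
  qed
  have lim: "(\<lambda>k. indicator (T k) x) \<longlonglongrightarrow> const_on M 0 x" for x :: 'a
  proof (cases "\<exists>i. x \<in> C i")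
    case True
    then obtain i where i: "x \<in> C i" by blast
    have "x \<notin> T k" if "k > i" for k
    proof
      assume "x \<in> T k"
      then obtain n where "k \<le> n" "x \<in> C n" by (auto simp: T_def)
      moreover have "n \<noteq> i" using that \<open>k \<le> n\<close> by auto
      then have "C n \<inter> C i = {}" using disj unfolding disjoint_family_on_def by blast
      ultimately show False using i by blast
    qed
    then have "\<forall>k\<ge>Suc i. indicator (T k) x = const_on M 0 x"
      by (simp add: const_on_zero)
    then show ?thesis by (intro tendsto_eventually eventually_sequentiallyI) blast
  next
    case False
    then have "x \<notin> T k" for k by (auto simp: T_def)
    then show ?thesis by (simp add: const_on_zero)
  qed
  have bound: "\<bar>indicator (T k) x\<bar> \<le> (1::real)" for k x
    by (simp add: indicator_def)
  obtain K where "\<forall>k>K. strict_pref pr (const_on M \<epsilon>) (indicator (T k))"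
    using eventually_strict_pref(1)[where fs="\<lambda>k. indicator (T k)",
        OF indicator_in_Linf[OF T] const_on_in_Linf const_on_in_Linf bound lim
        strict_pref_const[OF nonnull \<open>0 < \<epsilon>\<close>]] by blast
  then show False using pr_T[of "Suc K"] by (auto simp: strict_pref_def)
qed

end

lemma greedy_disjoint_family:
  assumes "\<And>S. pick S \<inter> S = {}"
  obtains D :: "nat \<Rightarrow> 'a set" where "disjoint_family D" "\<And>n. D n = pick (\<Union>i<n. D i)"
proof -
  define U where "U = rec_nat {} (\<lambda>_ S. S \<union> pick S)"
  define D where "D n = pick (U n)" for n
  have "U 0 = {}" "U (Suc n) = U n \<union> D n" for n
    by (simp_all add: U_def D_def)
  then have U: "U n = (\<Union>i<n. D i)" for n
    by (induction n) (simp_all add: lessThan_Suc Un_commute)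
  have less: "D i \<inter> D j = {}" if "i < j" for i j
  proof -
    have "D i \<subseteq> U j" using that by (auto simp: U)
    moreover have "D j \<inter> U j = {}" unfolding D_def using assms .
    ultimately show ?thesis by blast
  qed
  have "disjoint_family D"
    unfolding disjoint_family_on_def
  proof (intro ballI impI)
    fix i j :: nat assume "i \<noteq> j"
    then show "D i \<inter> D j = {}"
      using less[of i j] less[of j i] by (cases "i < j") auto
  qed
  moreover have "D n = pick (\<Union>i<n. D i)" for n
    unfolding U[symmetric] by (rule D_def)
  ultimately show ?thesis by (rule that)
qed

context preference
begin

text \<open>Greedily add disjoint members of at least half the largest capacity still available; the
  capacities of the added members tend to 0, so a non-null disjoint member would contradict
  the choice.\<close>
lemma exhaustion:
  assumes sets: "\<CC> \<subseteq> sets M" and "{} \<in> \<CC>"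
    and UN: "\<And>D. (\<And>n::nat. D n \<in> \<CC>) \<Longrightarrow> disjoint_family D \<Longrightarrow> (\<Union>n. D n) \<in> \<CC>"
  shows "\<exists>E\<in>\<CC>. \<forall>C\<in>\<CC>. C \<inter> E = {} \<longrightarrow> C \<in> null_events M pr"
proof -
  define free where "free S = {C \<in> \<CC>. C \<inter> S = {}}" for S
  have free: "capacity ` free S \<noteq> {}" "bdd_above (capacity ` free S)" for S
    using \<open>{} \<in> \<CC>\<close> sets capacity_le_1 by (auto simp: free_def intro!: bdd_aboveI[where M=1])
  have "\<exists>C\<in>free S. Sup (capacity ` free S) / 2 \<le> capacity C" for S
  proof (cases "0 < Sup (capacity ` free S)")
    case True
    then have "Sup (capacity ` free S) / 2 < Sup (capacity ` free S)" by simp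
    then show ?thesis using less_cSup_iff[OF free] by (auto intro: less_imp_le)
  next
    case False
    then show ?thesis
      using \<open>{} \<in> \<CC>\<close> capacity_nonneg[of "{}"] by (intro bexI[of _ "{}"]) (auto simp: free_def)
  qed
  then obtain pick where pick: "\<And>S. pick S \<in> free S"
    "\<And>S. Sup (capacity ` free S) / 2 \<le> capacity (pick S)"
    by metis
  have "pick S \<inter> S = {}" for S using pick(1)[of S] by (simp add: free_def)
  then obtain D :: "nat \<Rightarrow> 'a set" where disj: "disjoint_family D" and D: "\<And>n. D n = pick (\<Union>i<n. D i)"
    using greedy_disjoint_family by blast
  have D_in: "D n \<in> \<CC>" for n using pick(1) D[of n] by (auto simp: free_def)
  have "(\<Union>n. D n) \<in> \<CC>" using UN[of D] D_in disj by blast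
  then show ?thesis
  proof (rule bexI[rotated], intro ballI impI)
    fix C assume C: "C \<in> \<CC>" "C \<inter> (\<Union>n. D n) = {}"
    show "C \<in> null_events M pr"
    proof (rule ccontr)
      assume nonnull: "C \<notin> null_events M pr"
      have C_M: "C \<in> sets M" using C(1) sets by blast
      have "capacity C / 2 \<le> capacity (D n)" for n
      proof -
        have "C \<in> free (\<Union>i<n. D i)" using C by (auto simp: free_def)
        then have "capacity C \<le> Sup (capacity ` free (\<Union>i<n. D i))"
          using free(2) by (intro cSup_upper) auto
        then show ?thesis using pick(2)[of "\<Union>i<n. D i"] unfolding D[of n, symmetric] by linarith
      qed
      moreover have "space M \<notin> null_events M pr"
        using null_events_subset[OF C_M sets.sets_into_space[OF C_M]] nonnull by blast
      moreover have "D n \<in> sets M" for n using D_in sets by blast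
      moreover have "0 < capacity C / 2" using capacity_pos[OF C_M nonnull] by simp
      ultimately show False
        using disjoint_family_capacity_not_bounded_below[OF _ _ disj] by blast
    qed
  qed
qed

section \<open>The conditional Chisini mean\<close>

lemma null_events_of_pr_restr_reversed:
  assumes B: "B \<in> sets M" and a: "a \<in> Linf M" and b: "b \<in> Linf M" and "q < q'"
    and b_le: "\<And>x. x \<in> B \<Longrightarrow> b x \<le> q" and a_ge: "\<And>x. x \<in> B \<Longrightarrow> q' \<le> a x"
    and reversed: "pr (restr B b) (restr B a)"
  shows "B \<in> null_events M pr"
proof (rule ccontr)
  assume nonnull: "B \<notin> null_events M pr"
  have "pr (restr B (const_on M q)) (restr B (const_on M q'))"
    using pr_trans[OF pr_trans[OF pr_restr_le_const[OF B b b_le] reversed] pr_restr_ge_const[OF B a a_ge]]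
      restr_in_Linf[OF _ B] a b const_on_in_Linf by blast
  then show False
    using strict_pref_restr_const[OF B nonnull \<open>q < q'\<close>] by (simp add: strict_pref_def)
qed

text \<open>Cover \<open>{g2 < g1}\<close> by the events \<open>{g2 \<le> q} \<inter> {q' \<le> g1}\<close> with rational \<open>q < q'\<close>.\<close>
lemma null_events_less:
  assumes N: "subalgebra M N" and g1: "g1 \<in> Linf N" and g2: "g2 \<in> Linf N"
    and reversed: "\<And>A. A \<in> sets N \<Longrightarrow> pr (restr A g2) (restr A g1)"
  shows "{x \<in> space M. g2 x < g1 x} \<in> null_events M pr"
proof -
  have space: "space N = space M" using N by (simp add: subalgebra_def)
  define F where "F p = {x \<in> space M. g2 x \<le> fst p \<and> snd p \<le> g1 x}" for p :: "real \<times> real"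
  let ?P = "{p \<in> \<rat> \<times> \<rat>. fst p < snd p}"
  have F: "F p \<in> sets N" for p
  proof -
    have [measurable]: "g1 \<in> borel_measurable N" "g2 \<in> borel_measurable N"
      using Linf_measurable g1 g2 by auto
    have "{x \<in> space N. g2 x \<le> fst p \<and> snd p \<le> g1 x} \<in> sets N" by measurable
    then show ?thesis by (simp add: F_def space)
  qed
  have "F p \<in> null_events M pr" if "p \<in> ?P" for p
    using that N F[of p] Linf_subalgebra[OF N] g1 g2 reversed[OF F[of p]]
    by (intro null_events_of_pr_restr_reversed[where q="fst p" and q'="snd p"])
      (auto simp: F_def subalgebra_def)
  then have "(\<Union>p\<in>?P. F p) \<in> null_events M pr"
    by (intro null_events_UN_countable countable_subset[OF _ countable_SIGMA[OF countable_rat countable_rat]])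
      auto
  moreover have "{x \<in> space M. g2 x < g1 x} \<subseteq> (\<Union>p\<in>?P. F p)"
  proof
    fix x assume x: "x \<in> {x \<in> space M. g2 x < g1 x}"
    then obtain q where q: "q \<in> \<rat>" "g2 x < q" "q < g1 x" using Rats_dense_in_real by blast
    then obtain q' where q': "q' \<in> \<rat>" "q < q'" "q' < g1 x" using Rats_dense_in_real by blast
    have "(q, q') \<in> ?P" "x \<in> F (q, q')" using x q q' by (auto simp: F_def)
    then show "x \<in> (\<Union>p\<in>?P. F p)" by blast
  qed
  moreover have "{x \<in> space M. g2 x < g1 x} \<in> sets M"
    using Linf_measurable[OF Linf_subalgebra[OF N g1]] Linf_measurable[OF Linf_subalgebra[OF N g2]]
    by measurable
  ultimately show ?thesis using null_events_subset by blast
qed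

definition ge_events :: "'a measure \<Rightarrow> ('a \<Rightarrow> real) \<Rightarrow> real \<Rightarrow> 'a set set" where
  "ge_events N f t = {A \<in> sets N. \<forall>B\<in>sets N. B \<subseteq> A \<longrightarrow> pr (restr B f) (restr B (const_on M t))}"

context
  fixes N :: "'a measure" and f :: "'a \<Rightarrow> real"
  assumes N: "subalgebra M N" and f: "f \<in> Linf M"
begin

lemma sets_subalgebra: "A \<in> sets N \<Longrightarrow> A \<in> sets M"
  using N by (auto simp: subalgebra_def)

lemma space_subalgebra: "space N = space M"
  using N by (simp add: subalgebra_def)

lemma ge_events_sets: "A \<in> ge_events N f t \<Longrightarrow> A \<in> sets N"
  by (simp add: ge_events_def)

lemma ge_events_empty: "{} \<in> ge_events N f t"
  using pr_refl[OF zero_in_Linf] by (auto simp: ge_events_def restr_empty)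

lemma ge_events_subset: "A \<in> ge_events N f t \<Longrightarrow> B \<in> sets N \<Longrightarrow> B \<subseteq> A \<Longrightarrow> B \<in> ge_events N f t"
  by (auto simp: ge_events_def)

lemma ge_events_antimono: "s \<le> t \<Longrightarrow> A \<in> ge_events N f t \<Longrightarrow> A \<in> ge_events N f s"
  unfolding ge_events_def
  using pr_trans[OF _ pr_restr_const_mono restr_in_Linf[OF f] restr_in_Linf[OF const_on_in_Linf]
      restr_in_Linf[OF const_on_in_Linf]] sets_subalgebra
  by blast

lemma ge_events_UN_disjoint:
  fixes D :: "nat \<Rightarrow> 'a set"
  assumes D: "\<And>n. D n \<in> ge_events N f t" and disj: "disjoint_family D"
  shows "(\<Union>n. D n) \<in> ge_events N f t"
proof -
  have D_N: "D n \<in> sets N" for n using ge_events_sets[OF D] .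
  have "pr (restr B f) (restr B (const_on M t))" if B: "B \<in> sets N" "B \<subseteq> (\<Union>n. D n)" for B
  proof -
    have "pr (restr (\<Union>n. B \<inter> D n) f) (restr (\<Union>n. B \<inter> D n) (const_on M t))"
    proof (rule pr_restr_UN[OF _ _ f const_on_in_Linf])
      show "B \<inter> D n \<in> sets M" for n using B(1) D_N by (intro sets_subalgebra) auto
      show "disjoint_family (\<lambda>n. B \<inter> D n)" using disj by (auto simp: disjoint_family_on_def)
      show "pr (restr (B \<inter> D n) f) (restr (B \<inter> D n) (const_on M t))" for n
        using D[of n] B(1) D_N[of n] by (auto simp: ge_events_def)
    qed
    moreover have "(\<Union>n. B \<inter> D n) = B" using B(2) by auto
    ultimately show ?thesis by simp
  qed
  then show ?thesis using D_N by (auto simp: ge_events_def)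
qed

lemma ge_events_UN_countable:
  assumes "countable I" "\<And>i. i \<in> I \<Longrightarrow> D i \<in> ge_events N f t"
  shows "(\<Union>i\<in>I. D i) \<in> ge_events N f t"
proof (cases "I = {}")
  case True
  then show ?thesis using ge_events_empty by simp
next
  case False
  define D' where "D' n = D (from_nat_into I n)" for n
  have D': "D' n \<in> ge_events N f t" for n
    unfolding D'_def using assms(2) from_nat_into[OF False] .
  have "range D' \<subseteq> sets N" using ge_events_sets[OF D'] by blast
  then have "disjointed D' n \<in> ge_events N f t" for n
    using sets.range_disjointed_sets by (intro ge_events_subset[OF D' _ disjointed_subset]) blast
  then have "(\<Union>n. disjointed D' n) \<in> ge_events N f t"
    by (intro ge_events_UN_disjoint disjoint_family_disjointed)
  moreover have "(\<Union>n. D' n) = (\<Union>i\<in>range (from_nat_into I). D i)"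
    unfolding D'_def by auto
  ultimately show ?thesis
    using range_from_nat_into[OF False assms(1)] by (simp add: UN_disjointed_eq)
qed

lemma ge_events_exhaustion:
  "\<exists>E\<in>ge_events N f t. \<forall>C\<in>ge_events N f t. C \<inter> E = {} \<longrightarrow> C \<in> null_events M pr"
proof (rule exhaustion[OF _ ge_events_empty])
  show "ge_events N f t \<subseteq> sets M" using ge_events_sets sets_subalgebra by blast
qed (rule ge_events_UN_disjoint)

text \<open>Exhaust the N-events in B on which t is preferred to f; the rest of B is non-null, and
  f is preferred to t on each of its N-subevents.\<close>
lemma ge_events_nonnull_subset:
  assumes B: "B \<in> sets N" and strict: "strict_pref pr (restr B f) (restr B (const_on M t))"
  obtains B' where "B' \<in> ge_events N f t" "B' \<subseteq> B" "B' \<notin> null_events M pr"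
proof -
  let ?\<CC> = "{C \<in> sets N. C \<subseteq> B \<and> pr (restr C (const_on M t)) (restr C f)}"
  have UN: "(\<Union>n. D n) \<in> ?\<CC>" if D: "\<And>n. D n \<in> ?\<CC>" and disj: "disjoint_family D" for D :: "nat \<Rightarrow> 'a set"
  proof -
    have "pr (restr (\<Union>n. D n) (const_on M t)) (restr (\<Union>n. D n) f)"
      using D sets_subalgebra by (intro pr_restr_UN[OF _ disj const_on_in_Linf f]) auto
    then show ?thesis using D by auto
  qed
  have "{} \<in> ?\<CC>" using pr_refl[OF zero_in_Linf] by (simp add: restr_empty)
  moreover have "?\<CC> \<subseteq> sets M" using sets_subalgebra by blast
  ultimately obtain E where E: "E \<in> ?\<CC>" and E_max: "\<forall>C\<in>?\<CC>. C \<inter> E = {} \<longrightarrow> C \<in> null_events M pr"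
    using exhaustion[OF _ _ UN] by blast
  have E_N: "E \<in> sets N" and "E \<subseteq> B" and pr_E: "pr (restr E (const_on M t)) (restr E f)"
    using E by auto
  have BE_N: "B - E \<in> sets N" using B E_N by auto
  show ?thesis
  proof (rule that)
    show "B - E \<in> ge_events N f t"
      unfolding ge_events_def
    proof (intro CollectI conjI ballI impI BE_N)
      fix C assume C: "C \<in> sets N" "C \<subseteq> B - E"
      show "pr (restr C f) (restr C (const_on M t))"
      proof (rule ccontr)
        assume not: "\<not> pr (restr C f) (restr C (const_on M t))"
        have C_M: "C \<in> sets M" using sets_subalgebra[OF C(1)] .
        have "pr (restr C (const_on M t)) (restr C f)"
          using not pr_total[OF restr_in_Linf[OF f C_M] restr_in_Linf[OF const_on_in_Linf C_M]] by blast
        with C have "C \<in> ?\<CC>" by blast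
        then have "C \<in> null_events M pr" using E_max C(2) by blast
        then show False using not pr_restr_null[OF _ f const_on_in_Linf] by blast
      qed
    qed
    show "B - E \<subseteq> B" by blast
    show "B - E \<notin> null_events M pr"
    proof
      assume null: "B - E \<in> null_events M pr"
      have "E \<inter> (B - E) = {}" by blast
      from pr_restr_Un[OF sets_subalgebra[OF E_N] sets_subalgebra[OF BE_N] this const_on_in_Linf f pr_E
          pr_restr_null[OF null const_on_in_Linf f]]
      have "pr (restr (E \<union> (B - E)) (const_on M t)) (restr (E \<union> (B - E)) f)" .
      moreover have "E \<union> (B - E) = B" using \<open>E \<subseteq> B\<close> by blast
      ultimately show False using strict by (simp add: strict_pref_def)
    qed
  qed
qed

context
  fixes R :: real and E :: "real \<Rightarrow> 'a set" and g :: "'a \<Rightarrow> real"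
  assumes f_bound: "\<And>x. x \<in> space M \<Longrightarrow> \<bar>f x\<bar> \<le> R"
    and E: "\<And>t. E t \<in> ge_events N f t"
    and E_max: "\<And>t C. C \<in> ge_events N f t \<Longrightarrow> C \<inter> E t = {} \<Longrightarrow> C \<in> null_events M pr"
    and g: "g \<in> Linf N"
    and g_lower: "\<And>q x. q \<in> \<rat> \<Longrightarrow> q \<le> R \<Longrightarrow> x \<in> E q \<Longrightarrow> x \<in> space N \<Longrightarrow> q \<le> g x"
    and g_upper: "\<And>x t. x \<in> space N \<Longrightarrow> - R \<le> t \<Longrightarrow> t < g x \<Longrightarrow> \<exists>q\<in>\<rat>. q \<le> R \<and> t < q \<and> x \<in> E q"
begin

lemma pr_restr_ge_const_below_sup:
  assumes B: "B \<in> sets N" and less: "\<And>x. x \<in> B \<Longrightarrow> c < g x"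
  shows "pr (restr B f) (restr B (const_on M c))"
proof (cases "c < - R")
  case True
  have "c \<le> f x" if "x \<in> B" for x
    using True f_bound[of x] sets.sets_into_space[OF B] space_subalgebra that by fastforce
  then show ?thesis by (rule pr_restr_ge_const[OF sets_subalgebra[OF B] f])
next
  case False
  let ?A = "\<Union>q\<in>{q \<in> \<rat>. q \<le> R \<and> c < q}. E q"
  have "?A \<in> ge_events N f c"
    using E ge_events_antimono[OF less_imp_le]
    by (intro ge_events_UN_countable countable_subset[OF _ countable_rat]) auto
  moreover have "B \<subseteq> ?A"
  proof
    fix x assume "x \<in> B"
    then show "x \<in> ?A"
      using g_upper[of x c] less[of x] False sets.sets_into_space[OF B] by auto
  qed
  ultimately show ?thesis using B by (auto simp: ge_events_def)
qed

lemma pr_restr_le_const_above_sup: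
  assumes B: "B \<in> sets N" and less: "\<And>x. x \<in> B \<Longrightarrow> g x < c"
  shows "pr (restr B (const_on M c)) (restr B f)"
proof (cases "R < c")
  case True
  have "f x \<le> c" if "x \<in> B" for x
    using True f_bound[of x] sets.sets_into_space[OF B] space_subalgebra that by fastforce
  then show ?thesis by (rule pr_restr_le_const[OF sets_subalgebra[OF B] f])
next
  case False
  show ?thesis
  proof (rule ccontr)
    assume "\<not> pr (restr B (const_on M c)) (restr B f)"
    then have "strict_pref pr (restr B f) (restr B (const_on M c))"
      using not_pr_iff_strict_pref restr_in_Linf const_on_in_Linf f sets_subalgebra[OF B] by blast
    then obtain B' where B': "B' \<in> ge_events N f c" "B' \<subseteq> B" "B' \<notin> null_events M pr"
      by (rule ge_events_nonnull_subset[OF B])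
    \<comment> \<open>Split B' according to a rational strictly between g and c.\<close>
    define P where "P r = {x \<in> B'. g x < r}" for r
    have B'_space: "B' \<subseteq> space N" using sets.sets_into_space[OF ge_events_sets[OF B'(1)]] .
    have P: "P r \<in> sets N" for r
    proof -
      have [measurable]: "g \<in> borel_measurable N" using Linf_measurable[OF g] .
      have "P r = B' \<inter> {x \<in> space N. g x < r}" using B'_space by (auto simp: P_def)
      also have "\<dots> \<in> sets N" using ge_events_sets[OF B'(1)] by measurable
      finally show ?thesis .
    qed
    have "B' = (\<Union>r\<in>{r \<in> \<rat>. r < c}. P r)"
    proof (intro equalityI subsetI)
      fix x assume x: "x \<in> B'"
      then obtain r where "r \<in> \<rat>" "g x < r" "r < c"
        using Rats_dense_in_real less[of x] B'(2) by blast
      with x show "x \<in> (\<Union>r\<in>{r \<in> \<rat>. r < c}. P r)" by (auto simp: P_def)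
    qed (auto simp: P_def)
    moreover have "countable {r \<in> \<rat>. r < c}" by (rule countable_subset[OF _ countable_rat]) auto
    ultimately obtain r where r: "r \<in> \<rat>" "r < c" "P r \<notin> null_events M pr"
      using B'(3) null_events_UN_countable[of "{r \<in> \<rat>. r < c}" P] by auto
    have "P r \<in> ge_events N f r"
      using ge_events_subset[OF ge_events_antimono[OF less_imp_le[OF r(2)] B'(1)] P]
      by (auto simp: P_def)
    moreover have "P r \<inter> E r = {}"
    proof (intro equals0I)
      fix x assume "x \<in> P r \<inter> E r"
      then have x: "x \<in> B'" "g x < r" "x \<in> E r" by (auto simp: P_def)
      moreover have "r \<le> R" using r(2) False by linarith
      ultimately have "r \<le> g x" using g_lower[OF r(1)] B'_space by blast
      with x(2) show False by linarith
    qed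
    ultimately show False using E_max r(3) by blast
  qed
qed

lemma sup_in_chisini: "g \<in> chisini N pr f"
proof -
  have "indiff pr (restr A f) (restr A g)" if A: "A \<in> sets N" for A
    using pr_restr_ge_of_const_below[OF N g A f pr_restr_ge_const_below_sup]
      pr_restr_le_of_const_above[OF N g A f pr_restr_le_const_above_sup]
    by (simp add: indiff_def)
  then show ?thesis using g by (simp add: chisini_def)
qed

end

lemma chisini_nonempty: "chisini N pr f \<noteq> {}"
proof -
  obtain R where R: "0 \<le> R" "\<And>x. x \<in> space M \<Longrightarrow> \<bar>f x\<bar> \<le> R" using LinfE[OF f] by blast
  have "\<exists>E. \<forall>t. E t \<in> ge_events N f t \<and> (\<forall>C\<in>ge_events N f t. C \<inter> E t = {} \<longrightarrow> C \<in> null_events M pr)"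
    using ge_events_exhaustion by (intro choice) blast
  then obtain E where E: "\<And>t. E t \<in> ge_events N f t"
    and E_max: "\<And>t C. C \<in> ge_events N f t \<Longrightarrow> C \<inter> E t = {} \<Longrightarrow> C \<in> null_events M pr"
    by blast
  show ?thesis
  proof (rule sup_of_rational_levels[OF ge_events_sets[OF E] R(1)])
    fix g assume g: "g \<in> Linf N"
      "\<And>q x. q \<in> \<rat> \<Longrightarrow> q \<le> R \<Longrightarrow> x \<in> E q \<Longrightarrow> x \<in> space N \<Longrightarrow> q \<le> g x"
      "\<And>x t. x \<in> space N \<Longrightarrow> - R \<le> t \<Longrightarrow> t < g x \<Longrightarrow> \<exists>q\<in>\<rat>. q \<le> R \<and> t < q \<and> x \<in> E q"
    have "g \<in> chisini N pr f"
      by (rule sup_in_chisini[OF R(2) E E_max g(1) g(2) g(3)])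
    then show ?thesis by blast
  qed

qed

lemma chisini_unique:
  assumes g: "g \<in> chisini N pr f" and g': "g' \<in> chisini N pr f"
  shows "{x \<in> space M. g x \<noteq> g' x} \<in> null_events M pr"
proof -
  have "pr (restr A h) (restr A h')" if "A \<in> sets N" "h \<in> {g, g'}" "h' \<in> {g, g'}" for A h h'
  proof -
    have A: "A \<in> sets M" using sets_subalgebra[OF that(1)] .
    have "h \<in> Linf M" "h' \<in> Linf M"
      using that(2,3) g g' Linf_subalgebra[OF N] by (auto simp: chisini_def)
    moreover have "pr (restr A h) (restr A f)" "pr (restr A f) (restr A h')"
      using that g g' by (auto simp: chisini_def indiff_def)
    ultimately show ?thesis
      using pr_trans restr_in_Linf[OF _ A] f by blast
  qed
  then have "{x \<in> space M. g' x < g x} \<in> null_events M pr" "{x \<in> space M. g x < g' x} \<in> null_events M pr"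
    using g g' by (auto intro!: null_events_less[OF N] simp: chisini_def)
  moreover have "{x \<in> space M. g x \<noteq> g' x} = {x \<in> space M. g' x < g x} \<union> {x \<in> space M. g x < g' x}"
    by auto
  ultimately show ?thesis using null_events_Un by simp
qed

end

end

theorem mainTheorem6:
  fixes M N :: "'a measure"
    and pr :: "('a \<Rightarrow> real) \<Rightarrow> ('a \<Rightarrow> real) \<Rightarrow> bool"
    and f :: "'a \<Rightarrow> real"
  assumes "preference_order M pr"
    and "SM M pr" and "PC M pr" and "ST M pr"
    and "subalgebra M N"
    and "f \<in> Linf M"
  shows "chisini N pr f \<noteq> {} \<and>
    (\<forall>g\<in>chisini N pr f. \<forall>g'\<in>chisini N pr f.
        {x \<in> space M. g x \<noteq> g' x} \<in> null_events M pr)"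
proof -
  interpret preference M pr
    using assms(1-4) by unfold_locales
  show ?thesis
    using chisini_nonempty[OF assms(5,6)] chisini_unique[OF assms(5,6)] by blast
qed

end
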